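(* Let $p$ be a prime and let $P_p=\sum_{k=0}^{p-2}a_kp^k$, with digits $a_k\in\{0,1,\dots,p-1\}$ (so $P_p<p^{p-1}$), be a positive period of the Bell numbers modulo $p$, i.e. $B_{n+P_p}\equiv B_n\pmod p$ for all $n\geq 0$ (not necessarily the minimal period). Then \[ \sum_{k=0}^{p-2}a_k\geq p+1. \]
   Context: $B_n$ is the $n$-th Bell number, the number of partitions of an $n$-element set into nonempty blocks. *)

theory Defs
  imports Main "HOL-Library.Disjoint_Sets" "HOL-Computational_Algebra.Primes"
begin

definition Bell :: "nat \<Rightarrow> nat" where
  "Bell n = card {P. partition_on {..<n} P}"

end

theory Submission
  imports Defs "HOL-Computational_Algebra.Polynomial"
begin

text \<open>
  Let \<open>L\<close> be the linear functional on \<open>\<int>[x]\<close> with \<open>L(x^n) = B\<^sub>n\<close> and let \<open>I\<close> be the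
  ideal of all \<open>g\<close> such that \<open>p\<close> divides \<open>L(h g)\<close> for every \<open>h\<close>. The Bell recurrence reads
  \<open>L(x h) = L(h(x + 1))\<close>; it makes \<open>I\<close> stable under \<open>x \<mapsto> x + 1\<close> and yields
  \<open>L(h \<cdot> x(x - 1)\<cdots>(x - p + 1)) = L(h(x + p)) \<equiv> L(h)\<close>. As that falling factorial is
  \<open>x^p - x\<close> modulo \<open>p\<close>, this is Touchard's congruence \<open>x^p \<equiv> x + 1\<close> mod \<open>I\<close>, whence
  \<open>x^(p^k) \<equiv> x + k\<close> and \<open>x^P \<equiv> Q = \<Prod>\<^sub>k (x + k)^(a\<^sub>k)\<close>, while periodicity says \<open>x^P \<equiv> 1\<close>.
  If \<open>\<Sum>\<^sub>k a\<^sub>k \<le> p\<close>, the forward difference of \<open>Q\<close> lies in \<open>I\<close> and has degree \<open>< p\<close>, which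
  forces all its coefficients to be divisible by \<open>p\<close>. So \<open>Q(t)\<close> mod \<open>p\<close> is constant along
  \<open>t, t + 1, \<dots>\<close>; but \<open>Q(-k) = 0\<close> for a digit \<open>a\<^sub>k > 0\<close>, while \<open>Q(1) = \<Prod>\<^sub>k (k + 1)^(a\<^sub>k)\<close>
  is prime to \<open>p\<close>.
\<close>

section \<open>Set partitions and the Bell recurrence\<close>

lemma card_partition_on_le_inj_image:
  assumes "inj_on f A" "finite (f ` A)"
  shows "card {P. partition_on A P} \<le> card {P. partition_on (f ` A) P}"
proof (rule card_inj_on_le[where f = "(`) ((`) f)"])
  show "finite {P. partition_on (f ` A) P}" using assms(2) by (rule finitely_many_partition_on)
  show "(`) ((`) f) ` {P. partition_on A P} \<subseteq> {P. partition_on (f ` A) P}"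
  proof safe
    fix P assume P: "partition_on A P"
    have "(`) f ` P - {{}} = (`) f ` P" using partition_onD3[OF P] by auto
    then show "partition_on (f ` A) ((`) f ` P)" using partition_on_inj_image[OF P assms(1)] by simp
  qed
  show "inj_on ((`) ((`) f)) {P. partition_on A P}"
  proof (rule inj_onI)
    fix P Q assume "P \<in> {P. partition_on A P}" "Q \<in> {P. partition_on A P}"
      and "(`) f ` P = (`) f ` Q"
    moreover have "P \<subseteq> Pow A" "Q \<subseteq> Pow A" using calculation by (auto simp: partition_on_def)
    ultimately show "P = Q" using inj_on_image_eq_iff[OF inj_on_image_Pow[OF assms(1)]] by simp
  qed
qed

lemma card_partition_on_bij_betw:
  assumes "bij_betw f A B" "finite A"
  shows "card {P. partition_on A P} = card {P. partition_on B P}"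
proof (rule antisym)
  have "finite B" using assms bij_betw_finite by blast
  then show "card {P. partition_on A P} \<le> card {P. partition_on B P}"
    using assms card_partition_on_le_inj_image[of f A] by (simp add: bij_betw_def)
  have "bij_betw (inv_into A f) B A" using assms(1) by (rule bij_betw_inv_into)
  then show "card {P. partition_on B P} \<le> card {P. partition_on A P}"
    using assms card_partition_on_le_inj_image[of "inv_into A f" B] by (simp add: bij_betw_def)
qed

lemma card_partition_on_eq_Bell:
  assumes "finite A"
  shows "card {P. partition_on A P} = Bell (card A)"
proof -
  obtain h where "bij_betw h {..<card A} A"
    using ex_bij_betw_nat_finite[OF assms] by (auto simp: atLeast0LessThan)
  then show ?thesis unfolding Bell_def by (intro card_partition_on_bij_betw[symmetric]) auto
qed

lemma Bell_0 [simp]: "Bell 0 = 1"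
  by (simp add: Bell_def partition_on_empty)

lemma bij_betw_partition_on_insert:
  assumes "a \<notin> A"
  shows "bij_betw (\<lambda>(T, Q). insert (insert a (A - T)) Q)
    (SIGMA T:Pow A. {Q. partition_on T Q}) {P. partition_on (insert a A) P}"
    (is "bij_betw ?\<Phi> ?S ?P")
proof -
  define \<Psi> where "\<Psi> P = ({x\<in>A. \<forall>b\<in>P. a \<in> b \<longrightarrow> x \<notin> b}, {b\<in>P. a \<notin> b})" for P
  have block_of_a: "\<exists>b\<in>P. a \<in> b \<and> \<Psi> P = (A - b, P - {b})
      \<and> partition_on (A - b) (P - {b}) \<and> insert a (A - (A - b)) = b"
    if P: "partition_on (insert a A) P" for P
  proof -
    obtain b where b: "b \<in> P" "a \<in> b" using P by (auto simp: partition_on_def)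
    have uniq: "\<And>b'. b' \<in> P \<Longrightarrow> x \<in> b' \<Longrightarrow> x \<in> b \<Longrightarrow> b' = b" for x
      using P b(1) by (auto simp: partition_on_def disjoint_def)
    have "{x\<in>A. \<forall>b\<in>P. a \<in> b \<longrightarrow> x \<notin> b} = A - b" using uniq b by blast
    moreover have "{b\<in>P. a \<notin> b} = P - {b}" using uniq b by blast
    moreover have "disjnt b (\<Union>(P - {b}))" using uniq by (auto simp: disjnt_def)
    then have "partition_on (insert a A - b) (P - {b})"
      using partition_on_insert P b(1) by (metis insert_Diff)
    moreover have "insert a A - b = A - b" using b by auto
    moreover have "b \<subseteq> insert a A" using P b by (auto simp: partition_on_def)
    then have "insert a (A - (A - b)) = b" using b by blast
    ultimately show ?thesis using b unfolding \<Psi>_def by (intro bexI[of _ b]) simp_all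
  qed
  show ?thesis
  proof (rule bij_betw_byWitness[where f' = \<Psi>])
    show "\<forall>x\<in>?S. \<Psi> (?\<Phi> x) = x"
    proof
      fix x assume "x \<in> ?S"
      then obtain T Q where x: "x = (T, Q)" "T \<subseteq> A" "partition_on T Q" by auto
      then have "\<forall>b\<in>Q. a \<notin> b" using assms by (auto simp: partition_on_def)
      then show "\<Psi> (?\<Phi> x) = x" unfolding x \<Psi>_def using x(2) assms by (auto simp: Ball_def)
    qed
    show "\<forall>P\<in>?P. ?\<Phi> (\<Psi> P) = P"
    proof
      fix P assume "P \<in> ?P"
      then obtain b where "b \<in> P" "\<Psi> P = (A - b, P - {b})" "insert a (A - (A - b)) = b"
        using block_of_a by auto
      then show "?\<Phi> (\<Psi> P) = P" by (simp add: insert_absorb)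
    qed
    show "?\<Phi> ` ?S \<subseteq> ?P"
    proof (rule image_subsetI)
      fix x assume "x \<in> ?S"
      then obtain T Q where x: "x = (T, Q)" "T \<subseteq> A" "partition_on T Q" by auto
      have "disjnt (insert a (A - T)) (\<Union>Q)"
        using x assms by (auto simp: disjnt_def partition_on_def)
      moreover have "insert a A - insert a (A - T) = T" using x assms by auto
      ultimately show "?\<Phi> x \<in> ?P"
        using partition_on_insert[of "insert a (A - T)" Q "insert a A"] x by (simp; blast)
    qed
    show "\<Psi> ` ?P \<subseteq> ?S"
    proof
      fix x assume "x \<in> \<Psi> ` ?P"
      then obtain P where "partition_on (insert a A) P" "x = \<Psi> P" by auto
      with block_of_a obtain b where "x = (A - b, P - {b})" "partition_on (A - b) (P - {b})"
        by blast
      then show "x \<in> ?S" by auto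
    qed
  qed
qed

lemma Bell_Suc: "Bell (Suc n) = (\<Sum>k\<le>n. (n choose k) * Bell k)"
proof -
  have "Bell (Suc n) = card {P. partition_on (insert n {..<n}) P}"
    by (simp add: Bell_def lessThan_Suc)
  also have "\<dots> = card (SIGMA T:Pow {..<n}. {Q. partition_on T Q})"
    using bij_betw_same_card[OF bij_betw_partition_on_insert[of n "{..<n}"]] by simp
  also have "\<dots> = (\<Sum>T\<in>Pow {..<n}. card {Q. partition_on T Q})"
    by (intro card_SigmaI) (auto intro: finitely_many_partition_on finite_subset)
  also have "\<dots> = (\<Sum>T\<in>Pow {..<n}. Bell (card T))"
    by (intro sum.cong refl card_partition_on_eq_Bell) (auto intro: finite_subset)
  also have "\<dots> = (\<Sum>k\<le>n. \<Sum>T\<in>{T\<in>Pow {..<n}. card T = k}. Bell (card T))"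
    by (intro sum.group[symmetric]) (auto intro: card_mono[of "{..<n}", simplified])
  also have "\<dots> = (\<Sum>k\<le>n. card {T. T \<subseteq> {..<n} \<and> card T = k} * Bell k)"
    by (intro sum.cong refl) simp
  also have "\<dots> = (\<Sum>k\<le>n. (n choose k) * Bell k)"
    by (simp add: n_subsets)
  finally show ?thesis .
qed

lemma pcompose_X_power: "pcompose ([:0, 1:] ^ n) q = q ^ n"
  by (induction n) (simp_all add: pcompose_mult pcompose_1 pcompose_pCons)

lemma coeff_linear_power_one: "coeff ([:1, 1:] ^ i) k = (of_nat (i choose k) :: 'a::comm_semiring_1)"
  by (cases "k \<le> i") (simp_all add: coeff_linear_poly_power coeff_eq_0 degree_linear_power binomial_eq_0)

lemma const_poly_dvd_imp_dvd_poly: "[:c:] dvd g \<Longrightarrow> c dvd poly g x"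
  by (auto elim!: dvdE)

lemma const_poly_dvd_pcompose_shift_diff:
  fixes h :: "'a::comm_ring_1 poly"
  shows "[:c:] dvd pcompose h [:c, 1:] - h"
proof (induction h)
  case 0
  then show ?case by simp
next
  case (pCons a h)
  define H where "H = pcompose h [:c, 1:]"
  have "pcompose (pCons a h) [:c, 1:] - pCons a h = [:c:] * H + [:0, 1:] * (H - h)"
    by (simp add: pcompose_pCons H_def algebra_simps)
  moreover have "[:c:] dvd [:c:] * H + [:0, 1:] * (H - h)"
    using pCons.IH unfolding H_def by (intro dvd_add dvd_triv_left dvd_mult)
  ultimately show ?case by simp
qed

lemma const_poly_dvd_linear_power_prime:
  fixes c :: int
  assumes p: "prime p"
  shows "[:int p:] dvd [:c, 1:] ^ p - [:0, 1:] ^ p - [:c ^ p:]"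
proof -
  have "int p dvd coeff ([:c, 1:] ^ p - monom 1 p - [:c ^ p:]) i" for i
  proof -
    consider "i = 0" | "0 < i" "i < p" | "p \<le> i" by linarith
    then show ?thesis
    proof cases
      case 1
      then show ?thesis using prime_gt_0_nat[OF p] by (simp add: coeff_linear_poly_power)
    next
      case 2
      then have "p dvd p choose i" using p by (intro dvd_choose_prime) auto
      then show ?thesis
        using 2 by (auto simp: coeff_linear_poly_power coeff_monom coeff_pCons split: nat.split)
    next
      case 3
      then show ?thesis
        using prime_gt_0_nat[OF p]
        by (cases "i = p") (simp_all add: coeff_linear_poly_power coeff_eq_0 degree_linear_power
            coeff_monom coeff_pCons split: nat.split)
    qed
  qed
  then show ?thesis by (simp add: const_poly_dvd_iff monom_altdef)
qed

lemma prime_not_dvd_prod_power_less: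
  fixes b :: "'a \<Rightarrow> nat"
  assumes "prime p" "finite K" "\<And>k. k \<in> K \<Longrightarrow> 0 < b k \<and> b k < p"
  shows "\<not> p dvd (\<Prod>k\<in>K. b k ^ a k)"
proof
  assume "p dvd (\<Prod>k\<in>K. b k ^ a k)"
  then obtain k where "k \<in> K" "p dvd b k ^ a k" using assms(1,2) by (auto simp: prime_dvd_prod_iff)
  then have "p dvd b k" using assms(1) by (blast intro: prime_dvd_power)
  then show False using assms(3)[OF \<open>k \<in> K\<close>] by (auto dest: dvd_imp_le)
qed

section \<open>Forward differences\<close>

definition fwd_diff :: "'a::comm_ring_1 poly \<Rightarrow> 'a poly" where
  "fwd_diff g = pcompose g [:1, 1:] - g"

lemma fwd_diff_diff: "fwd_diff (f - g) = fwd_diff f - fwd_diff g"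
  by (simp add: fwd_diff_def pcompose_diff)

lemma coeff_pcompose_shift_one:
  fixes g :: "'a::comm_ring_1 poly"
  assumes "degree g \<le> n"
  shows "coeff (pcompose g [:1, 1:]) k = (\<Sum>i\<le>n. coeff g i * of_nat (i choose k))"
proof -
  have g: "g = (\<Sum>i\<le>n. monom (coeff g i) i)" using assms by (simp add: poly_as_sum_of_monoms')
  show ?thesis
    by (subst g) (simp add: pcompose_sum coeff_sum monom_altdef pcompose_smult
        pcompose_X_power coeff_linear_power_one)
qed

lemma degree_coeff_fwd_diff:
  fixes g :: "'a::comm_ring_1 poly"
  assumes "degree g \<le> Suc n"
  shows "degree (fwd_diff g) \<le> n" "coeff (fwd_diff g) n = of_nat (Suc n) * coeff g (Suc n)"
proof -
  have coeff: "coeff (fwd_diff g) k = (\<Sum>i\<in>{k<..Suc n}. coeff g i * of_nat (i choose k))" for k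
  proof (cases "k \<le> Suc n")
    case True
    then have "{..Suc n} = {..k} \<union> {k<..Suc n}" "{..k} \<inter> {k<..Suc n} = {}" by auto
    moreover have "(\<Sum>i\<le>k. coeff g i * of_nat (i choose k)) = coeff g k"
      by (simp add: lessThan_Suc_atMost[symmetric] binomial_eq_0)
    ultimately show ?thesis
      using assms by (simp add: fwd_diff_def coeff_pcompose_shift_one[of _ "Suc n"] sum.union_disjoint)
  next
    case False
    then show ?thesis
      using assms by (simp add: fwd_diff_def coeff_pcompose_shift_one[of _ "Suc n"] binomial_eq_0 coeff_eq_0)
  qed
  show "degree (fwd_diff g) \<le> n" by (rule degree_le) (simp add: coeff)
  have "{n<..Suc n} = {Suc n}" by auto
  then show "coeff (fwd_diff g) n = of_nat (Suc n) * coeff g (Suc n)"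
    by (simp add: coeff mult.commute)
qed

lemma funpow_fwd_diff_eq_const:
  fixes g :: "'a::comm_ring_1 poly"
  assumes "degree g \<le> n"
  shows "(fwd_diff ^^ n) g = [:of_nat (fact n) * coeff g n:]"
  using assms
proof (induction n arbitrary: g)
  case 0
  then show ?case by (simp add: degree_0_id)
next
  case (Suc n)
  have "(fwd_diff ^^ Suc n) g = (fwd_diff ^^ n) (fwd_diff g)" by (simp add: funpow_swap1)
  also have "\<dots> = [:of_nat (fact n) * coeff (fwd_diff g) n:]"
    using Suc.IH degree_coeff_fwd_diff(1)[OF Suc.prems] by blast
  also have "\<dots> = [:of_nat (fact (Suc n)) * coeff g (Suc n):]"
    using degree_coeff_fwd_diff(2)[OF Suc.prems] by (simp add: algebra_simps)
  finally show ?case .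
qed

lemma const_poly_dvd_fwd_diff:
  fixes g :: "'a::comm_ring_1 poly"
  assumes "[:c:] dvd g"
  shows "[:c:] dvd fwd_diff g"
proof -
  from assms obtain u where "g = [:c:] * u" by (rule dvdE)
  then have "fwd_diff g = [:c:] * fwd_diff u"
    by (simp add: fwd_diff_def pcompose_mult pcompose_smult right_diff_distrib)
  then show ?thesis by (metis dvd_triv_left)
qed

lemma const_poly_dvd_fwd_diff_imp_dvd_poly_shift:
  assumes "[:c:] dvd fwd_diff g"
  shows "c dvd poly g (x + of_nat n) - poly g x"
proof (induction n)
  case 0
  then show ?case by simp
next
  case (Suc n)
  have "c dvd poly (fwd_diff g) (x + of_nat n)"
    using assms by (rule const_poly_dvd_imp_dvd_poly)
  then have "c dvd poly g (x + of_nat (Suc n)) - poly g (x + of_nat n)"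
    by (simp add: fwd_diff_def poly_pcompose add_ac)
  then show ?case using Suc.IH by (metis dvd_add diff_add_cancel add_diff_eq)
qed

lemma const_poly_dvd_if_fwd_diff_closed:
  fixes S :: "int poly set"
  assumes p: "prime p"
    and diff: "\<And>a b. a \<in> S \<Longrightarrow> b \<in> S \<Longrightarrow> a - b \<in> S"
    and multiple: "\<And>g. [:int p:] dvd g \<Longrightarrow> g \<in> S"
    and fwd: "\<And>g. g \<in> S \<Longrightarrow> fwd_diff g \<in> S"
    and const: "\<And>c. [:c:] \<in> S \<Longrightarrow> int p dvd c"
    and "g \<in> S" "degree g < p"
  shows "[:int p:] dvd g"
  using assms(6,7)
proof (induction "degree g" arbitrary: g rule: less_induct)
  case less
  define d where "d = degree g"
  define c where "c = lead_coeff g"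
  have "(fwd_diff ^^ k) g \<in> S" for k
    using less.prems(1) by (induction k) (simp_all add: fwd)
  moreover have "(fwd_diff ^^ d) g = [:of_nat (fact d) * c:]"
    by (simp add: funpow_fwd_diff_eq_const d_def c_def)
  ultimately have "[:of_nat (fact d) * c:] \<in> S" by metis
  then have "int p dvd of_nat (fact d) * c" by (rule const)
  moreover have "\<not> p dvd fact d"
    using p less.prems(2) by (simp add: d_def prime_dvd_fact_iff)
  then have "\<not> int p dvd of_nat (fact d)" by (metis int_dvd_int_iff of_nat_fact)
  ultimately have "int p dvd c"
    using p by (simp add: prime_dvd_mult_iff prime_nat_int_transfer)
  then have monom_dvd: "[:int p:] dvd monom c d" by (simp add: const_poly_dvd_iff coeff_monom)
  define g' where "g' = g - monom c d"
  have "[:int p:] dvd g'"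
  proof (cases "d = 0")
    case True
    then show ?thesis by (simp add: g'_def c_def d_def monom_0 degree_0_id)
  next
    case False
    have "degree g' \<le> d - 1"
      using False by (intro degree_le) (auto simp: g'_def c_def d_def coeff_monom coeff_eq_0)
    then show ?thesis
      using False less.prems diff[OF less.prems(1) multiple[OF monom_dvd]]
      by (intro less.hyps) (simp_all add: g'_def d_def)
  qed
  then have "[:int p:] dvd g' + monom c d" using monom_dvd by (rule dvd_add)
  then show ?case by (simp add: g'_def)
qed

lemma const_poly_dvd_if_fwd_diff_dvd:
  assumes p: "prime p" and "[:int p:] dvd fwd_diff g" "int p dvd poly g 0" "degree g < p"
  shows "[:int p:] dvd g"
proof (rule const_poly_dvd_if_fwd_diff_closed[OF p])
  let ?S = "{g. [:int p:] dvd fwd_diff g \<and> int p dvd poly g 0}"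
  show "a - b \<in> ?S" if "a \<in> ?S" "b \<in> ?S" for a b
    using that by (simp add: fwd_diff_diff dvd_diff)
  show "g \<in> ?S" if "[:int p:] dvd g" for g
    using that const_poly_dvd_fwd_diff const_poly_dvd_imp_dvd_poly by auto
  show "fwd_diff g \<in> ?S" if "g \<in> ?S" for g
    using that const_poly_dvd_fwd_diff const_poly_dvd_imp_dvd_poly by auto
  show "int p dvd c" if "[:c:] \<in> ?S" for c
    using that by simp
  show "g \<in> ?S" "degree g < p" using assms(2-4) by simp_all
qed

definition ffact_poly :: "nat \<Rightarrow> int poly" where
  "ffact_poly m = (\<Prod>j<m. [:- int j, 1:])"

lemma ffact_poly_Suc: "ffact_poly (Suc m) = ffact_poly m * [:- int m, 1:]"
  by (simp add: ffact_poly_def)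

lemma ffact_poly_Suc_shift: "ffact_poly (Suc m) = [:0, 1:] * pcompose (ffact_poly m) [:-1, 1:]"
  unfolding ffact_poly_def pcompose_prod
  by (subst prod.lessThan_Suc_shift) (simp add: pcompose_pCons add.commute)

lemma degree_ffact_poly: "degree (ffact_poly m) = m"
  by (simp add: ffact_poly_def degree_prod_eq_sum_degree)

lemma lead_coeff_ffact_poly: "lead_coeff (ffact_poly m) = 1"
  unfolding ffact_poly_def by (subst lead_coeff_prod) simp

lemma fwd_diff_ffact_poly_Suc: "fwd_diff (ffact_poly (Suc m)) = smult (int (Suc m)) (ffact_poly m)"
proof -
  have X: "pcompose [:-1, 1:] [:1, 1::int:] = [:0, 1:]" by (simp add: pcompose_pCons)
  have "pcompose (ffact_poly (Suc m)) [:1, 1:] = [:1, 1:] * ffact_poly m"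
    by (simp add: ffact_poly_Suc_shift pcompose_mult pcompose_assoc[symmetric] X pcompose_pCons)
  then show ?thesis
    by (simp add: fwd_diff_def ffact_poly_Suc algebra_simps smult_add_left)
qed

lemma const_poly_dvd_ffact_poly_prime:
  assumes p: "prime p"
  shows "[:int p:] dvd ffact_poly p - [:0, 1:] ^ p + [:0, 1:]"
proof -
  define E where "E = ffact_poly p - ([:0, 1:] ^ p - [:0, 1:])"
  obtain m where m: "p = Suc m" using prime_gt_0_nat[OF p] gr0_implies_Suc by blast
  have fwd_diff_X: "fwd_diff ([:0, 1:] ^ p - [:0, 1:]) = [:1, 1:] ^ p - [:0, 1:] ^ p - [:1 ^ p:]"
    by (simp add: fwd_diff_def pcompose_diff pcompose_X_power pcompose_pCons one_pCons)
  have fwd_diff_ffact: "fwd_diff (ffact_poly p) = [:int p:] * ffact_poly m"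
    unfolding m fwd_diff_ffact_poly_Suc by simp
  have fwd_diff_E: "[:int p:] dvd fwd_diff E"
    unfolding E_def fwd_diff_diff[of "ffact_poly p"] fwd_diff_X fwd_diff_ffact
    using const_poly_dvd_linear_power_prime[OF p, of 1] by (rule dvd_diff[OF dvd_triv_left])
  have "poly (ffact_poly p) 0 = 0"
    unfolding ffact_poly_def poly_prod using m by (auto simp: prod_zero_iff)
  then have E_0: "int p dvd poly E 0" using prime_gt_0_nat[OF p] by (simp add: E_def power_0_left)
  have "degree E < p"
  proof -
    have "[:0, 1:] ^ p = monom (1::int) p" by (simp add: monom_altdef)
    then have "coeff E i = 0" if "p \<le> i" for i
      using that prime_ge_2_nat[OF p] degree_ffact_poly[of p] lead_coeff_ffact_poly[of p]
      by (cases "i = p") (auto simp: E_def coeff_monom coeff_pCons coeff_eq_0 split: nat.split)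
    then show ?thesis
      using prime_gt_0_nat[OF p] by (intro le_less_trans[OF degree_le[of "p - 1"]]) auto
  qed
  with fwd_diff_E E_0 have "[:int p:] dvd E" by (rule const_poly_dvd_if_fwd_diff_dvd[OF p])
  then show ?thesis by (simp add: E_def algebra_simps)
qed

section \<open>The Bell functional\<close>

definition Bell_functional :: "int poly \<Rightarrow> int" where
  "Bell_functional g = (\<Sum>i\<le>degree g. coeff g i * int (Bell i))"

lemma Bell_functional_eq_sum:
  "degree g \<le> n \<Longrightarrow> Bell_functional g = (\<Sum>i\<le>n. coeff g i * int (Bell i))"
  unfolding Bell_functional_def by (rule sum.mono_neutral_left) (auto simp: coeff_eq_0)

lemma Bell_functional_add: "Bell_functional (f + g) = Bell_functional f + Bell_functional g"
proof -
  let ?n = "max (degree f) (degree g)"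
  have "degree (f + g) \<le> ?n" by (rule degree_add_le_max)
  then show ?thesis
    by (simp add: Bell_functional_eq_sum[of _ ?n] sum.distrib distrib_right)
qed

lemma Bell_functional_smult: "Bell_functional (smult c g) = c * Bell_functional g"
  using degree_smult_le[of c g]
  by (simp add: Bell_functional_eq_sum[of _ "degree g"] sum_distrib_left mult.assoc)

lemma Bell_functional_diff: "Bell_functional (f - g) = Bell_functional f - Bell_functional g"
  using Bell_functional_add[of f "smult (-1) g"] Bell_functional_smult[of "-1" g] by simp

lemma Bell_functional_sum: "Bell_functional (\<Sum>i\<in>A. f i) = (\<Sum>i\<in>A. Bell_functional (f i))"
  by (induction A rule: infinite_finite_induct)
    (simp_all add: Bell_functional_add Bell_functional_def[of 0])

lemma Bell_functional_monom: "Bell_functional (monom c n) = c * int (Bell n)"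
proof -
  have "Bell_functional (monom c n) = (\<Sum>i\<le>n. coeff (monom c n) i * int (Bell i))"
    by (rule Bell_functional_eq_sum[OF degree_monom_le])
  also have "\<dots> = (\<Sum>i\<le>n. if i = n then c * int (Bell n) else 0)"
    by (rule sum.cong) (auto simp: coeff_monom)
  finally show ?thesis by simp
qed

lemma Bell_functional_const_poly_dvd: "[:m:] dvd g \<Longrightarrow> m dvd Bell_functional g"
  by (auto simp: Bell_functional_smult)

lemma Bell_functional_linear_power: "Bell_functional ([:1, 1:] ^ n) = int (Bell (Suc n))"
  by (simp add: Bell_functional_def degree_linear_power coeff_linear_poly_power Bell_Suc)

text \<open>The Bell recurrence in umbral form.\<close>

lemma Bell_functional_X_mult:
  "Bell_functional ([:0, 1:] * q) = Bell_functional (pcompose q [:1, 1:])"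
proof -
  have monom: "Bell_functional ([:0, 1:] * monom c i) = Bell_functional (pcompose (monom c i) [:1, 1:])"
    for c i
  proof -
    have "[:0, 1:] * monom c i = monom c (Suc i)" by (simp add: monom_Suc)
    moreover have "pcompose (monom c i) [:1, 1:] = smult c ([:1, 1:] ^ i)"
      by (simp add: monom_altdef pcompose_smult pcompose_X_power)
    ultimately show ?thesis
      by (simp add: Bell_functional_monom Bell_functional_smult Bell_functional_linear_power)
  qed
  have q: "q = (\<Sum>i\<le>degree q. monom (coeff q i) i)" by (simp add: poly_as_sum_of_monoms)
  show ?thesis
    by (subst (1 2) q) (simp only: sum_distrib_left pcompose_sum Bell_functional_sum monom)
qed

lemma Bell_functional_ffact_poly_mult:
  "Bell_functional (ffact_poly m * q) = Bell_functional (pcompose q [:int m, 1:])"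
proof (induction m arbitrary: q)
  case 0
  then show ?case by (simp add: ffact_poly_def)
next
  case (Suc m)
  have X: "pcompose [:-1, 1:] [:1, 1::int:] = [:0, 1:]" by (simp add: pcompose_pCons)
  have "Bell_functional (ffact_poly (Suc m) * q)
      = Bell_functional ([:0, 1:] * (pcompose (ffact_poly m) [:-1, 1:] * q))"
    by (simp add: ffact_poly_Suc_shift mult.assoc)
  also have "\<dots> = Bell_functional (pcompose (pcompose (ffact_poly m) [:-1, 1:] * q) [:1, 1:])"
    by (rule Bell_functional_X_mult)
  also have "\<dots> = Bell_functional (ffact_poly m * pcompose q [:1, 1:])"
    by (simp add: pcompose_mult pcompose_assoc[symmetric] X)
  also have "\<dots> = Bell_functional (pcompose q [:int (Suc m), 1:])"
    by (simp add: Suc.IH pcompose_assoc[symmetric] pcompose_pCons)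
  finally show ?case .
qed

section \<open>The Bell ideal\<close>

definition Bell_ideal :: "int \<Rightarrow> int poly set" where
  "Bell_ideal m = {g. \<forall>h. m dvd Bell_functional (h * g)}"

lemma Bell_ideal_add: "f \<in> Bell_ideal m \<Longrightarrow> g \<in> Bell_ideal m \<Longrightarrow> f + g \<in> Bell_ideal m"
  by (simp add: Bell_ideal_def distrib_left Bell_functional_add)

lemma Bell_ideal_diff: "f \<in> Bell_ideal m \<Longrightarrow> g \<in> Bell_ideal m \<Longrightarrow> f - g \<in> Bell_ideal m"
  by (simp add: Bell_ideal_def right_diff_distrib Bell_functional_diff)

lemma Bell_ideal_mult_left: "g \<in> Bell_ideal m \<Longrightarrow> u * g \<in> Bell_ideal m"
  by (simp add: Bell_ideal_def mult.assoc[symmetric])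

lemma Bell_ideal_const_poly_dvd: "[:m:] dvd g \<Longrightarrow> g \<in> Bell_ideal m"
  by (simp add: Bell_ideal_def Bell_functional_const_poly_dvd)

lemma Bell_ideal_const:
  assumes "[:c:] \<in> Bell_ideal m"
  shows "m dvd c"
proof -
  have "m dvd Bell_functional (1 * [:c:])" using assms unfolding Bell_ideal_def by blast
  then show ?thesis by (simp add: Bell_functional_def)
qed

lemma Bell_ideal_pcompose_shift_one:
  assumes "g \<in> Bell_ideal m"
  shows "pcompose g [:1, 1:] \<in> Bell_ideal m"
  unfolding Bell_ideal_def
proof (intro CollectI allI)
  fix h :: "int poly"
  define h' where "h' = pcompose h [:-1, 1:]"
  have "h = pcompose h' [:1, 1:]"
    by (simp add: h'_def pcompose_assoc[symmetric] pcompose_pCons)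
  then have "Bell_functional (h * pcompose g [:1, 1:]) = Bell_functional ([:0, 1:] * (h' * g))"
    by (simp only: Bell_functional_X_mult pcompose_mult)
  also have "\<dots> = Bell_functional (([:0, 1:] * h') * g)" by (simp only: mult.assoc)
  also have "m dvd \<dots>" using assms unfolding Bell_ideal_def by blast
  finally show "m dvd Bell_functional (h * pcompose g [:1, 1:])" .
qed

lemma Bell_ideal_pcompose_shift:
  assumes "g \<in> Bell_ideal m"
  shows "pcompose g [:int k, 1:] \<in> Bell_ideal m"
proof (induction k)
  case 0
  then show ?case using assms by simp
next
  case (Suc k)
  have "pcompose g [:int (Suc k), 1:] = pcompose (pcompose g [:int k, 1:]) [:1, 1:]"
    by (simp add: pcompose_assoc[symmetric] pcompose_pCons add.commute)
  then show ?case using Suc.IH by (simp add: Bell_ideal_pcompose_shift_one)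
qed

lemma Bell_ideal_fwd_diff: "g \<in> Bell_ideal m \<Longrightarrow> fwd_diff g \<in> Bell_ideal m"
  unfolding fwd_diff_def by (intro Bell_ideal_diff Bell_ideal_pcompose_shift_one)

lemma Bell_ideal_power_diff: "a - b \<in> Bell_ideal m \<Longrightarrow> a ^ n - b ^ n \<in> Bell_ideal m"
proof (induction n)
  case 0
  then show ?case by (simp add: Bell_ideal_def Bell_functional_def)
next
  case (Suc n)
  have "a ^ Suc n - b ^ Suc n = a * (a ^ n - b ^ n) + b ^ n * (a - b)"
    by (simp add: algebra_simps)
  then show ?case using Suc by (simp add: Bell_ideal_add Bell_ideal_mult_left)
qed

lemma Bell_ideal_prod_diff:
  "(\<And>i. i \<in> A \<Longrightarrow> f i - g i \<in> Bell_ideal m) \<Longrightarrow> prod f A - prod g A \<in> Bell_ideal m"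
proof (induction A rule: infinite_finite_induct)
  case (insert x A)
  have "prod f (insert x A) - prod g (insert x A) = f x * (prod f A - prod g A) + prod g A * (f x - g x)"
    using insert.hyps by (simp add: algebra_simps)
  then show ?case using insert by (simp add: Bell_ideal_add Bell_ideal_mult_left)
qed (simp_all add: Bell_ideal_def Bell_functional_def)

text \<open>Touchard's congruence \<open>B\<^sub>n\<^sub>+\<^sub>p \<equiv> B\<^sub>n + B\<^sub>n\<^sub>+\<^sub>1 (mod p)\<close>.\<close>

lemma Touchard_Bell_ideal:
  assumes p: "prime p"
  shows "[:0, 1:] ^ p - [:0, 1:] - 1 \<in> Bell_ideal (int p)"
proof -
  have "ffact_poly p - 1 \<in> Bell_ideal (int p)"
    unfolding Bell_ideal_def
  proof (intro CollectI allI)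
    fix h
    have "Bell_functional (h * (ffact_poly p - 1)) = Bell_functional (pcompose h [:int p, 1:] - h)"
      using Bell_functional_ffact_poly_mult[of p h]
      by (simp add: right_diff_distrib Bell_functional_diff mult.commute)
    then show "int p dvd Bell_functional (h * (ffact_poly p - 1))"
      by (simp add: Bell_functional_const_poly_dvd const_poly_dvd_pcompose_shift_diff)
  qed
  moreover have "ffact_poly p - [:0, 1:] ^ p + [:0, 1:] \<in> Bell_ideal (int p)"
    using const_poly_dvd_ffact_poly_prime[OF p] by (rule Bell_ideal_const_poly_dvd)
  ultimately have "(ffact_poly p - 1) - (ffact_poly p - [:0, 1:] ^ p + [:0, 1:]) \<in> Bell_ideal (int p)"
    by (rule Bell_ideal_diff)
  moreover have "(ffact_poly p - 1) - (ffact_poly p - [:0, 1:] ^ p + [:0, 1:]) = [:0, 1:] ^ p - [:0, 1:] - 1"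
    by (simp only: algebra_simps)
  ultimately show ?thesis by simp
qed

lemma X_power_prime_power_Bell_ideal:
  assumes p: "prime p"
  shows "[:0, 1:] ^ (p ^ k) - [:int k, 1:] \<in> Bell_ideal (int p)"
proof (induction k)
  case 0
  then show ?case by (simp add: Bell_ideal_const_poly_dvd)
next
  case (Suc k)
  have "[:0, 1:] ^ (p ^ Suc k) - [:int (Suc k), 1:]
      = (([:0, 1:] ^ (p ^ k)) ^ p - [:int k, 1:] ^ p)
        + pcompose ([:0, 1:] ^ p - [:0, 1:] - 1) [:int k, 1:]"
    by (simp add: power_mult[symmetric] mult.commute pcompose_diff pcompose_X_power pcompose_pCons
        one_pCons)
  moreover have "([:0, 1:] ^ (p ^ k)) ^ p - [:int k, 1:] ^ p \<in> Bell_ideal (int p)"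
    using Suc.IH by (rule Bell_ideal_power_diff)
  moreover have "pcompose ([:0, 1:] ^ p - [:0, 1:] - 1) [:int k, 1:] \<in> Bell_ideal (int p)"
    using Touchard_Bell_ideal[OF p] by (rule Bell_ideal_pcompose_shift)
  ultimately show ?case by (simp add: Bell_ideal_add)
qed

lemma X_power_digits_Bell_ideal:
  assumes "prime p"
  shows "[:0, 1:] ^ (\<Sum>k\<in>K. a k * p ^ k) - (\<Prod>k\<in>K. [:int k, 1:] ^ a k) \<in> Bell_ideal (int p)"
proof -
  have "[:0, 1::int:] ^ (\<Sum>k\<in>K. a k * p ^ k) = (\<Prod>k\<in>K. ([:0, 1:] ^ (p ^ k)) ^ a k)"
    by (simp add: power_sum power_mult[symmetric] mult.commute)
  then show ?thesis
    using X_power_prime_power_Bell_ideal[OF assms]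
    by (simp add: Bell_ideal_prod_diff Bell_ideal_power_diff)
qed

lemma X_power_period_Bell_ideal:
  assumes "\<And>n. Bell (n + P) mod p = Bell n mod p"
  shows "[:0, 1:] ^ P - 1 \<in> Bell_ideal (int p)"
  unfolding Bell_ideal_def
proof (intro CollectI allI)
  fix h :: "int poly"
  have h: "h = (\<Sum>i\<le>degree h. monom (coeff h i) i)" by (simp add: poly_as_sum_of_monoms)
  have "Bell_functional (h * monom 1 P) = (\<Sum>i\<le>degree h. coeff h i * int (Bell (i + P)))"
    by (subst (1) h) (simp add: sum_distrib_right mult_monom Bell_functional_sum Bell_functional_monom)
  moreover have "[:0, 1::int:] ^ P = monom 1 P" by (simp add: monom_altdef)
  ultimately have "Bell_functional (h * ([:0, 1:] ^ P - 1))
      = (\<Sum>i\<le>degree h. coeff h i * (int (Bell (i + P)) - int (Bell i)))"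
    by (simp add: right_diff_distrib Bell_functional_diff Bell_functional_def[of h] sum_subtractf)
  moreover have "int p dvd int (Bell (i + P)) - int (Bell i)" for i
    using assms[of i] by (metis mod_eq_dvd_iff of_nat_mod)
  ultimately show "int p dvd Bell_functional (h * ([:0, 1:] ^ P - 1))"
    by (simp add: dvd_sum)
qed

lemma digit_poly_minus_one_Bell_ideal:
  assumes "prime p" "\<And>n. Bell (n + P) mod p = Bell n mod p" "P = (\<Sum>k\<in>K. a k * p ^ k)"
  shows "(\<Prod>k\<in>K. [:int k, 1:] ^ a k) - 1 \<in> Bell_ideal (int p)"
proof -
  have "([:0, 1:] ^ P - 1) - ([:0, 1:] ^ P - (\<Prod>k\<in>K. [:int k, 1:] ^ a k)) \<in> Bell_ideal (int p)"
    using X_power_period_Bell_ideal[OF assms(2)] X_power_digits_Bell_ideal[OF assms(1), of a K]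
    unfolding assms(3) by (rule Bell_ideal_diff)
  then show ?thesis by simp
qed

lemma Bell_ideal_small_degree_poly_shift_cong:
  assumes p: "prime p" and "Q - 1 \<in> Bell_ideal (int p)" and "degree Q \<le> p"
  shows "int p dvd poly Q (x + of_nat n) - poly Q x"
proof -
  have "fwd_diff (Q - 1) = fwd_diff Q" by (simp add: fwd_diff_def pcompose_diff pcompose_1)
  then have "fwd_diff Q \<in> Bell_ideal (int p)" using assms(2) by (metis Bell_ideal_fwd_diff)
  moreover have "degree (fwd_diff Q) < p"
    using degree_coeff_fwd_diff(1)[of Q "p - 1"] assms(3) prime_gt_0_nat[OF p] by simp
  ultimately have "[:int p:] dvd fwd_diff Q"
    using p by (intro const_poly_dvd_if_fwd_diff_closed[of p "Bell_ideal (int p)"])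
      (simp_all add: Bell_ideal_diff Bell_ideal_const_poly_dvd Bell_ideal_fwd_diff Bell_ideal_const)
  then show ?thesis by (rule const_poly_dvd_fwd_diff_imp_dvd_poly_shift)
qed

theorem theorem3:
  fixes p P :: nat and a :: "nat \<Rightarrow> nat"
  assumes "prime p"
    and "\<And>k. k \<le> p - 2 \<Longrightarrow> a k < p"
    and "P = (\<Sum>k = 0..p - 2. a k * p ^ k)"
    and "P > 0"
    and "\<And>n. Bell (n + P) mod p = Bell n mod p"
  shows "(\<Sum>k = 0..p - 2. a k) \<ge> p + 1"
proof (rule ccontr)
  assume small: "\<not> ?thesis"
  define K where "K = {0..p - 2}"
  define Q where "Q = (\<Prod>k\<in>K. [:int k, 1:] ^ a k)"
  have "Q - 1 \<in> Bell_ideal (int p)"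
    using assms(1,5) assms(3)[folded K_def] unfolding Q_def by (rule digit_poly_minus_one_Bell_ideal)
  moreover have "degree Q \<le> p"
    using degree_prod_sum_le[of K "\<lambda>k. [:int k, 1:] ^ a k"] small
    by (simp add: Q_def K_def degree_linear_power)
  ultimately have periodic: "int p dvd poly Q (x + of_nat n) - poly Q x" for x n
    using assms(1) by (intro Bell_ideal_small_degree_poly_shift_cong)
  have "(\<Sum>k\<in>K. a k * p ^ k) \<noteq> 0" using assms(3,4) unfolding K_def by linarith
  then obtain k0 where "k0 \<in> K" "a k0 * p ^ k0 \<noteq> 0" by (rule sum.not_neutral_contains_not_neutral)
  then have "poly Q (- int k0) = 0"
    by (simp add: Q_def K_def poly_prod prod_zero_iff)
  then have "int p dvd poly Q 1" using periodic[of "- int k0" "Suc k0"] by simp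
  moreover have "poly Q 1 = int (\<Prod>k\<in>K. (k + 1) ^ a k)" by (simp add: Q_def poly_prod add.commute)
  moreover have "\<not> p dvd (\<Prod>k\<in>K. (k + 1) ^ a k)"
    using assms(1) prime_ge_2_nat[OF assms(1)] by (intro prime_not_dvd_prod_power_less) (auto simp: K_def)
  ultimately show False by (simp only: int_dvd_int_iff)
qed

end
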